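(* There exist absolute constants $c,C>0$ such that the following holds. Let $G=(V,E)$ be a finite connected triangle-free non-bipartite graph satisfying $CD(0,\infty)$. Then the eigenvalues $0=\lambda_1<\lambda_2\le\cdots\le\lambda_{|V|}$ of the Laplacian $\Delta$ satisfy \[ \frac{c}{dD^2}\leq \lambda_2\leq \cdots\leq \lambda_{|V|}\leq 2-\frac{C}{dD^2}, \] where $d$ is the maximal vertex degree and $D$ the diameter of $G$.
   Context: $G$ is a finite simple connected graph with degrees $d_x$. The Laplacian is $\Delta f(x)=\frac{1}{d_x}\sum_{y\sim x}(f(y)-f(x))$, with eigenvalues defined by $-\Delta f=\lambda f$, $f\ne0$. $\Gamma(f,g)=\frac12\{\Delta(fg)-g\Delta f-f\Delta g\}$, $\Gamma_2(f,g)=\frac12\{\Delta\Gamma(f,g)-\Gamma(g,\Delta f)-\Gamma(f,\Delta g)\}$. $G$ satisfies $CD(0,\infty)$ if $\Gamma_2(f,f)(x)\ge 0$ for all $f:V\to\mathbb{R}$ and all $x\in V$. *)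

theory Defs
  imports Complex_Main
begin

definition simple_graph :: "nat set \<Rightarrow> (nat \<Rightarrow> nat \<Rightarrow> bool) \<Rightarrow> bool" where
  "simple_graph V E \<longleftrightarrow> finite V \<and> V \<noteq> {} \<and>
     (\<forall>x y. E x y \<longrightarrow> E y x) \<and> (\<forall>x. \<not> E x x) \<and>
     (\<forall>x y. E x y \<longrightarrow> x \<in> V \<and> y \<in> V)"

definition deg :: "nat set \<Rightarrow> (nat \<Rightarrow> nat \<Rightarrow> bool) \<Rightarrow> nat \<Rightarrow> nat" where
  "deg V E x = card {y \<in> V. E x y}"

definition max_deg :: "nat set \<Rightarrow> (nat \<Rightarrow> nat \<Rightarrow> bool) \<Rightarrow> nat" where
  "max_deg V E = Max (deg V E ` V)"

definition connected_graph :: "nat set \<Rightarrow> (nat \<Rightarrow> nat \<Rightarrow> bool) \<Rightarrow> bool" where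
  "connected_graph V E \<longleftrightarrow> (\<forall>x\<in>V. \<forall>y\<in>V. E\<^sup>*\<^sup>* x y)"

definition triangle_free :: "nat set \<Rightarrow> (nat \<Rightarrow> nat \<Rightarrow> bool) \<Rightarrow> bool" where
  "triangle_free V E \<longleftrightarrow> \<not> (\<exists>x y z. E x y \<and> E y z \<and> E z x)"

definition bipartite :: "nat set \<Rightarrow> (nat \<Rightarrow> nat \<Rightarrow> bool) \<Rightarrow> bool" where
  "bipartite V E \<longleftrightarrow> (\<exists>A. \<forall>x y. E x y \<longrightarrow> (x \<in> A \<longleftrightarrow> y \<notin> A))"

definition gdist :: "(nat \<Rightarrow> nat \<Rightarrow> bool) \<Rightarrow> nat \<Rightarrow> nat \<Rightarrow> nat" where
  "gdist E x y = (LEAST n. (E ^^ n) x y)"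

definition diameter :: "nat set \<Rightarrow> (nat \<Rightarrow> nat \<Rightarrow> bool) \<Rightarrow> nat" where
  "diameter V E = Max {gdist E x y | x y. x \<in> V \<and> y \<in> V}"

definition laplacian :: "nat set \<Rightarrow> (nat \<Rightarrow> nat \<Rightarrow> bool) \<Rightarrow> (nat \<Rightarrow> real) \<Rightarrow> nat \<Rightarrow> real" where
  "laplacian V E f x = (1 / real (deg V E x)) * (\<Sum>y\<in>{y \<in> V. E x y}. f y - f x)"

definition Gamma :: "nat set \<Rightarrow> (nat \<Rightarrow> nat \<Rightarrow> bool) \<Rightarrow> (nat \<Rightarrow> real) \<Rightarrow> (nat \<Rightarrow> real) \<Rightarrow> nat \<Rightarrow> real" where
  "Gamma V E f g x = (1/2) * (laplacian V E (\<lambda>z. f z * g z) x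
      - g x * laplacian V E f x - f x * laplacian V E g x)"

definition Gamma2 :: "nat set \<Rightarrow> (nat \<Rightarrow> nat \<Rightarrow> bool) \<Rightarrow> (nat \<Rightarrow> real) \<Rightarrow> (nat \<Rightarrow> real) \<Rightarrow> nat \<Rightarrow> real" where
  "Gamma2 V E f g x = (1/2) * (laplacian V E (Gamma V E f g) x
      - Gamma V E g (laplacian V E f) x - Gamma V E f (laplacian V E g) x)"

definition CD_0_inf :: "nat set \<Rightarrow> (nat \<Rightarrow> nat \<Rightarrow> bool) \<Rightarrow> bool" where
  "CD_0_inf V E \<longleftrightarrow> (\<forall>f x. x \<in> V \<longrightarrow> Gamma2 V E f f x \<ge> 0)"

definition lap_eigenpair :: "nat set \<Rightarrow> (nat \<Rightarrow> nat \<Rightarrow> bool) \<Rightarrow> real \<Rightarrow> (nat \<Rightarrow> real) \<Rightarrow> bool" where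
  "lap_eigenpair V E lam f \<longleftrightarrow> (\<exists>x\<in>V. f x \<noteq> 0) \<and>
     (\<forall>x\<in>V. - laplacian V E f x = lam * f x)"

end

theory Submission
  imports Defs
begin

text \<open>
  Let -Delta f = lam f. At a vertex x where f satisfies the eigenvalue equation at x and at
  all neighbours of x, Gamma2(f)(x) = Delta Gamma(f)(x) / 2 + lam Gamma(f)(x), so CD(0,infinity)
  gives a Bochner inequality for Gamma(f). Together with Delta(f^2) = 2 Gamma(f) - 2 lam f^2,
  the maximum principle applied to Gamma(f) + 2 lam f^2 bounds Gamma(f) by 4 lam max f^2.
  At an endpoint of an edge of maximal slope m, Gamma(f) >= m^2 / (2 d), and max |f| <= D m
  because f has degree-weighted mean zero. Hence lam >= 1 / (8 d D^2).

  For the upper bound, triangle-freeness allows flipping the sign of f on the neighbours of a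
  vertex x without touching their other neighbours. The result satisfies the eigenvalue
  equation for 2 - lam at x and its neighbours, and its Gamma there is
  Gamma_plus(f)(y) = sum over z ~ y of (f z + f y)^2 / (2 d_y). So the same argument runs with
  Gamma_plus and 2 - lam; now an odd closed walk through a vertex of maximal |f| bounds
  2 max |f| by (2 D + 1) times the largest |f u + f v| over edges, and 2 - lam >= 1 / (18 d D^2).
\<close>

lemma ex_max_on_finite:
  fixes \<phi> :: "'a \<Rightarrow> real"
  assumes "finite S" "S \<noteq> {}"
  obtains x where "x \<in> S" "\<And>y. y \<in> S \<Longrightarrow> \<phi> y \<le> \<phi> x"
  using ex_is_arg_min_if_finite[OF assms, of "\<lambda>x. - \<phi> x"]
  by (auto simp: is_arg_min_linorder)

lemma weighted_sum_zero_sign_change: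
  fixes f w :: "'a \<Rightarrow> real"
  assumes "finite S" "(\<Sum>y\<in>S. w y * f y) = 0" "\<And>y. y \<in> S \<Longrightarrow> 0 < w y" "x \<in> S"
  shows "\<exists>y\<in>S. f x * f y \<le> 0"
proof (rule ccontr)
  assume "\<not> ?thesis"
  then have "0 < (\<Sum>y\<in>S. w y * (f x * f y))"
    using assms by (intro sum_pos) auto
  also have "\<dots> = f x * (\<Sum>y\<in>S. w y * f y)"
    by (simp add: sum_distrib_left algebra_simps)
  finally show False using assms(2) by simp
qed

lemma relpowp_abs_diff_le:
  fixes f :: "'a \<Rightarrow> real"
  assumes "\<And>a b. E a b \<Longrightarrow> \<bar>f a - f b\<bar> \<le> s" and "(E ^^ n) p q"
  shows "\<bar>f p - f q\<bar> \<le> real n * s"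
  using assms(2)
proof (induction n arbitrary: q)
  case (Suc n)
  then obtain r where r: "(E ^^ n) p r" "E r q" by auto
  have "\<bar>f p - f q\<bar> \<le> \<bar>f p - f r\<bar> + \<bar>f r - f q\<bar>" by simp
  also have "\<dots> \<le> real n * s + s" using Suc.IH[OF r(1)] assms(1)[OF r(2)] by simp
  finally show ?case by (simp add: algebra_simps)
qed simp

lemma relpowp_abs_alternating_le:
  fixes f :: "'a \<Rightarrow> real"
  assumes "\<And>a b. E a b \<Longrightarrow> \<bar>f a + f b\<bar> \<le> s" and "(E ^^ n) p q"
  shows "\<bar>f p - (-1) ^ n * f q\<bar> \<le> real n * s"
  using assms(2)
proof (induction n arbitrary: q)
  case (Suc n)
  then obtain r where r: "(E ^^ n) p r" "E r q" by auto
  have "f p - (-1) ^ Suc n * f q = (f p - (-1) ^ n * f r) + (-1) ^ n * (f r + f q)"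
    by (simp add: algebra_simps)
  moreover have "\<bar>(-1) ^ n * (f r + f q)\<bar> = \<bar>f r + f q\<bar>" by (simp add: abs_mult)
  ultimately have "\<bar>f p - (-1) ^ Suc n * f q\<bar>
      \<le> \<bar>f p - (-1) ^ n * f r\<bar> + \<bar>f r + f q\<bar>"
    by (metis abs_triangle_ineq)
  also have "\<dots> \<le> real n * s + s" using Suc.IH[OF r(1)] assms(1)[OF r(2)] by simp
  finally show ?case by (simp add: algebra_simps)
qed simp

lemma laplacian_add_scaled:
  "laplacian V E (\<lambda>z. g z + c * h z) x = laplacian V E g x + c * laplacian V E h x"
proof -
  have "(\<Sum>y\<in>{y\<in>V. E x y}. g y + c * h y - (g x + c * h x))
      = (\<Sum>y\<in>{y\<in>V. E x y}. (g y - g x) + c * (h y - h x))"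
    by (simp add: algebra_simps)
  also have "\<dots> = (\<Sum>y\<in>{y\<in>V. E x y}. g y - g x) + c * (\<Sum>y\<in>{y\<in>V. E x y}. h y - h x)"
    by (simp add: sum.distrib sum_distrib_left)
  finally show ?thesis
    unfolding laplacian_def by (simp add: algebra_simps)
qed

lemma laplacian_cong:
  "(\<And>z. z = x \<or> E x z \<Longrightarrow> g z = h z) \<Longrightarrow> laplacian V E g x = laplacian V E h x"
  unfolding laplacian_def by (intro arg_cong2[where f = "(*)"] sum.cong) auto

lemma laplacian_eq_nbr_average:
  assumes "0 < deg V E x"
  shows "laplacian V E g x = (\<Sum>y\<in>{y\<in>V. E x y}. g y) / real (deg V E x) - g x"
  using assms unfolding laplacian_def deg_def by (simp add: sum_subtractf field_simps)

lemma Gamma_eq_sum: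
  "Gamma V E g h x = (\<Sum>y\<in>{y\<in>V. E x y}. (g y - g x) * (h y - h x)) / (2 * real (deg V E x))"
proof -
  let ?N = "{y\<in>V. E x y}"
  have "(\<Sum>y\<in>?N. (g y - g x) * (h y - h x))
      = (\<Sum>y\<in>?N. (g y * h y - g x * h x) - h x * (g y - g x) - g x * (h y - h x))"
    by (simp add: algebra_simps)
  also have "\<dots> = (\<Sum>y\<in>?N. g y * h y - g x * h x)
      - h x * (\<Sum>y\<in>?N. g y - g x) - g x * (\<Sum>y\<in>?N. h y - h x)"
    by (simp add: sum_distrib_left right_diff_distrib sum_subtractf)
  finally have sum_eq: "(\<Sum>y\<in>?N. (g y - g x) * (h y - h x)) = \<dots>" .
  have scale: "1/2 * (1/d * A - k * (1/d * B) - l * (1/d * C)) = (A - k * B - l * C) / (2 * d)"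
    for d A B C k l :: real
    by (cases "d = 0") (simp_all add: field_simps)
  show ?thesis
    unfolding Gamma_def laplacian_def sum_eq by (rule scale)
qed

lemma Gamma_nonneg: "0 \<le> Gamma V E g g x"
  unfolding Gamma_eq_sum by (simp add: sum_nonneg)

lemma laplacian_square:
  "laplacian V E (\<lambda>z. (g z)\<^sup>2) x = 2 * Gamma V E g g x + 2 * g x * laplacian V E g x"
  unfolding Gamma_def power2_eq_square by (simp add: algebra_simps)

lemma laplacian_square_eigen:
  assumes "laplacian V E f x = - lam * f x"
  shows "laplacian V E (\<lambda>z. (f z)\<^sup>2) x = 2 * Gamma V E f f x - 2 * lam * (f x)\<^sup>2"
  using laplacian_square[of V E f x] assms by (simp add: power2_eq_square)

lemma Gamma2_eigen:
  assumes "laplacian V E h x = - \<kappa> * h x"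
    and "\<And>z. E x z \<Longrightarrow> laplacian V E h z = - \<kappa> * h z"
  shows "Gamma2 V E h h x = laplacian V E (Gamma V E h h) x / 2 + \<kappa> * Gamma V E h h x"
proof -
  have "Gamma V E h (laplacian V E h) x
      = (\<Sum>y\<in>{y\<in>V. E x y}. - \<kappa> * ((h y - h x) * (h y - h x))) / (2 * real (deg V E x))"
    unfolding Gamma_eq_sum using assms by (intro arg_cong2[where f = "(/)"] sum.cong) (auto simp: algebra_simps)
  also have "\<dots> = - \<kappa> * Gamma V E h h x"
    unfolding Gamma_eq_sum by (simp add: sum_negf sum_distrib_left)
  finally show ?thesis unfolding Gamma2_def by simp
qed

lemma sum_deg_laplacian:
  assumes "finite V" "\<And>x y. E x y \<Longrightarrow> E y x"
  shows "(\<Sum>x\<in>V. real (deg V E x) * laplacian V E g x) = 0"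
proof -
  define S where "S = (\<Sum>x\<in>V. \<Sum>y\<in>V. if E x y then g y - g x else 0)"
  have "real (deg V E x) * laplacian V E g x = (\<Sum>y\<in>V. if E x y then g y - g x else 0)" for x
    using assms(1) unfolding laplacian_def deg_def by (simp add: sum.inter_filter)
  then have "(\<Sum>x\<in>V. real (deg V E x) * laplacian V E g x) = S"
    unfolding S_def by simp
  moreover have "S = - S"
  proof -
    have "S = (\<Sum>y\<in>V. \<Sum>x\<in>V. if E x y then g y - g x else 0)"
      unfolding S_def by (rule sum.swap)
    also have "\<dots> = (\<Sum>y\<in>V. \<Sum>x\<in>V. - (if E y x then g x - g y else 0))"
      using assms(2) by (intro sum.cong refl) auto
    finally show ?thesis unfolding S_def by (simp add: sum_negf)
  qed
  ultimately show ?thesis by simp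
qed

lemma maximum_principle_bound:
  fixes G F :: "nat \<Rightarrow> real"
  assumes "finite V" "V \<noteq> {}" "0 < \<kappa>"
    and Bochner: "\<And>x. x \<in> V \<Longrightarrow> 0 \<le> laplacian V E G x / 2 + \<kappa> * G x"
    and square: "\<And>x. x \<in> V \<Longrightarrow> laplacian V E (\<lambda>z. (F z)\<^sup>2) x = 2 * G x - 2 * \<kappa> * (F x)\<^sup>2"
    and bounded: "\<And>x. x \<in> V \<Longrightarrow> \<bar>F x\<bar> \<le> M"
    and "z \<in> V"
  shows "G z \<le> 4 * \<kappa> * M\<^sup>2"
proof -
  define w where "w z = G z + 2 * \<kappa> * (F z)\<^sup>2" for z
  obtain x where x: "x \<in> V" and w_max: "\<And>y. y \<in> V \<Longrightarrow> w y \<le> w x"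
    using ex_max_on_finite[OF assms(1,2), of w] by blast
  have "laplacian V E w x \<le> 0"
    unfolding laplacian_def by (intro mult_nonneg_nonpos sum_nonpos) (simp_all add: w_max)
  moreover have "laplacian V E w x = laplacian V E G x + 2 * \<kappa> * (2 * G x - 2 * \<kappa> * (F x)\<^sup>2)"
    unfolding w_def[abs_def] laplacian_add_scaled square[OF x] ..
  ultimately have "\<kappa> * (G x - 2 * \<kappa> * (F x)\<^sup>2) \<le> 0"
    using Bochner[OF x] by (simp add: algebra_simps)
  then have "G x \<le> 2 * \<kappa> * (F x)\<^sup>2"
    using \<open>0 < \<kappa>\<close> by (simp add: mult_le_0_iff)
  moreover have "(F x)\<^sup>2 \<le> M\<^sup>2"
    using bounded[OF x] by (metis abs_ge_zero power2_abs power_mono)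
  then have "\<kappa> * (F x)\<^sup>2 \<le> \<kappa> * M\<^sup>2"
    using \<open>0 < \<kappa>\<close> by (simp add: mult_left_mono)
  ultimately have "w x \<le> 4 * \<kappa> * M\<^sup>2"
    unfolding w_def by linarith
  moreover have "G z \<le> w z"
    unfolding w_def using \<open>0 < \<kappa>\<close> by simp
  ultimately show ?thesis using w_max[OF \<open>z \<in> V\<close>] by simp
qed

definition Gamma_plus :: "nat set \<Rightarrow> (nat \<Rightarrow> nat \<Rightarrow> bool) \<Rightarrow> (nat \<Rightarrow> real) \<Rightarrow> nat \<Rightarrow> real" where
  "Gamma_plus V E f x = (\<Sum>y\<in>{y\<in>V. E x y}. (f y + f x)\<^sup>2) / (2 * real (deg V E x))"

lemma Gamma_plus_nonneg: "0 \<le> Gamma_plus V E f x"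
  unfolding Gamma_plus_def by (simp add: sum_nonneg)

lemma Gamma_plus_eq:
  assumes "0 < deg V E x"
  shows "Gamma_plus V E f x = Gamma V E f f x + 2 * f x * laplacian V E f x + 2 * (f x)\<^sup>2"
proof -
  let ?N = "{y\<in>V. E x y}"
  have "(\<Sum>y\<in>?N. (f y + f x)\<^sup>2)
      = (\<Sum>y\<in>?N. (f y - f x) * (f y - f x) + 4 * f x * (f y - f x) + 4 * (f x)\<^sup>2)"
    by (simp add: power2_eq_square algebra_simps)
  also have "\<dots> = (\<Sum>y\<in>?N. (f y - f x) * (f y - f x)) + 4 * f x * (\<Sum>y\<in>?N. f y - f x)
      + 4 * real (deg V E x) * (f x)\<^sup>2"
    by (simp add: sum.distrib sum_distrib_left deg_def)
  finally show ?thesis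
    unfolding Gamma_plus_def Gamma_eq_sum laplacian_def using assms by (simp add: field_simps)
qed

definition flip_nbrs :: "(nat \<Rightarrow> nat \<Rightarrow> bool) \<Rightarrow> (nat \<Rightarrow> real) \<Rightarrow> nat \<Rightarrow> nat \<Rightarrow> real" where
  "flip_nbrs E f x z = (if E x z then - f z else f z)"

lemma non_bipartite_has_edge: "\<not> bipartite V E \<Longrightarrow> \<exists>u v. E u v"
  unfolding bipartite_def by blast

locale nontrivial_connected_graph =
  fixes V :: "nat set" and E :: "nat \<Rightarrow> nat \<Rightarrow> bool"
  assumes simple: "simple_graph V E"
    and connected: "connected_graph V E"
    and has_edge: "\<exists>u v. E u v"
begin

lemma finite_V: "finite V"
  and V_nonempty: "V \<noteq> {}"
  and edge_sym: "E x y \<Longrightarrow> E y x"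
  and edge_irrefl: "\<not> E x x"
  and edge_in_V: "E x y \<Longrightarrow> x \<in> V" "E x y \<Longrightarrow> y \<in> V"
  using simple unfolding simple_graph_def by auto

lemma deg_pos:
  assumes x: "x \<in> V"
  shows "0 < deg V E x"
proof -
  obtain u v where uv: "E u v" using has_edge by blast
  have "\<exists>z. E x z"
  proof (cases "x = u")
    case False
    have "E\<^sup>*\<^sup>* x u" using connected x edge_in_V[OF uv] unfolding connected_graph_def by blast
    then show ?thesis using False by (metis converse_rtranclpE)
  qed (use uv in blast)
  then obtain z where "z \<in> {y\<in>V. E x y}" using edge_in_V by blast
  then show ?thesis
    unfolding deg_def using finite_V by (auto simp: card_gt_0_iff)
qed

lemma deg_le_max_deg: "x \<in> V \<Longrightarrow> deg V E x \<le> max_deg V E"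
  unfolding max_deg_def using finite_V by simp

lemma max_deg_pos: "0 < max_deg V E"
  using V_nonempty deg_pos deg_le_max_deg by (meson ex_in_conv order_less_le_trans)

lemma gdist_walk: "x \<in> V \<Longrightarrow> y \<in> V \<Longrightarrow> (E ^^ gdist E x y) x y"
  using connected unfolding connected_graph_def gdist_def
  by (metis LeastI rtranclp_imp_relpowp)

lemma gdist_le_diameter: "x \<in> V \<Longrightarrow> y \<in> V \<Longrightarrow> gdist E x y \<le> diameter V E"
proof -
  have "{gdist E x y | x y. x \<in> V \<and> y \<in> V} = (\<lambda>(x, y). gdist E x y) ` (V \<times> V)"
    by auto
  then have "finite {gdist E x y | x y. x \<in> V \<and> y \<in> V}"
    using finite_V by simp
  then show "x \<in> V \<Longrightarrow> y \<in> V \<Longrightarrow> gdist E x y \<le> diameter V E"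
    unfolding diameter_def by (intro Max_ge) auto
qed

lemma diameter_pos: "0 < diameter V E"
proof -
  obtain u v where uv: "E u v" using has_edge by blast
  then have "gdist E u v \<noteq> 0"
    using gdist_walk[of u v] edge_in_V edge_irrefl by (metis relpowp_0_E)
  then show ?thesis
    using gdist_le_diameter edge_in_V[OF uv] by (metis bot_nat_0.not_eq_extremum le_zero_eq)
qed

lemma ex_max_edge:
  fixes \<phi> :: "nat \<Rightarrow> nat \<Rightarrow> real"
  obtains a b where "E a b" "\<And>u v. E u v \<Longrightarrow> \<phi> u v \<le> \<phi> a b"
proof -
  have "{(u, v). E u v} \<subseteq> V \<times> V" using edge_in_V by auto
  then have "finite {(u, v). E u v}" using finite_V by (meson finite_SigmaI finite_subset)
  moreover have "{(u, v). E u v} \<noteq> {}" using has_edge by auto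
  ultimately obtain p where "p \<in> {(u, v). E u v}"
    and "\<And>q. q \<in> {(u, v). E u v} \<Longrightarrow> case_prod \<phi> q \<le> case_prod \<phi> p"
    using ex_max_on_finite by blast
  then show ?thesis using that by (cases p) auto
qed

lemma edge_term_le_nbr_average:
  assumes "E a b" "\<And>y. 0 \<le> \<phi> y"
  shows "\<phi> b / (2 * real (max_deg V E)) \<le> (\<Sum>y\<in>{y\<in>V. E a y}. \<phi> y) / (2 * real (deg V E a))"
proof (rule frac_le)
  show "\<phi> b \<le> (\<Sum>y\<in>{y\<in>V. E a y}. \<phi> y)"
    using assms finite_V edge_in_V by (intro member_le_sum) auto
  show "0 < 2 * real (deg V E a)" "2 * real (deg V E a) \<le> 2 * real (max_deg V E)"
    using deg_pos deg_le_max_deg edge_in_V(1)[OF assms(1)] by auto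
qed (use assms in \<open>auto intro: sum_nonneg\<close>)

lemma Gamma_edge_lower: "E a b \<Longrightarrow> (g b - g a)\<^sup>2 / (2 * real (max_deg V E)) \<le> Gamma V E g g a"
  unfolding Gamma_eq_sum power2_eq_square
  by (rule edge_term_le_nbr_average[where \<phi> = "\<lambda>y. (g y - g a) * (g y - g a)"]) auto

lemma abs_diff_le_diameter:
  assumes "\<And>u v. E u v \<Longrightarrow> \<bar>f u - f v\<bar> \<le> m" "x \<in> V" "y \<in> V"
  shows "\<bar>f x - f y\<bar> \<le> real (diameter V E) * m"
proof -
  have "0 \<le> m" using has_edge assms(1) by (meson abs_ge_zero order_trans)
  have "\<bar>f x - f y\<bar> \<le> real (gdist E x y) * m"
    using relpowp_abs_diff_le[OF assms(1) gdist_walk[OF assms(2,3)]] .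
  also have "\<dots> \<le> real (diameter V E) * m"
    using gdist_le_diameter[OF assms(2,3)] \<open>0 \<le> m\<close> by (simp add: mult_right_mono)
  finally show ?thesis .
qed

lemma abs_le_odd_cycle:
  assumes "\<not> bipartite V E" "\<And>u v. E u v \<Longrightarrow> \<bar>f u + f v\<bar> \<le> m" "x \<in> V"
  shows "2 * \<bar>f x\<bar> \<le> (2 * real (diameter V E) + 1) * m"
proof -
  have "\<not> (\<forall>u v. E u v \<longrightarrow>
      (u \<in> {z. even (gdist E x z)} \<longleftrightarrow> v \<notin> {z. even (gdist E x z)}))"
    using assms(1) unfolding bipartite_def by blast
  then obtain u v where uv: "E u v" and same_parity: "even (gdist E x u) \<longleftrightarrow> even (gdist E x v)"
    by auto
  define s :: real where "s = (-1) ^ gdist E x u"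
  have s_v: "s = (-1) ^ gdist E x v"
    unfolding s_def using same_parity by (cases "even (gdist E x u)") auto
  have walk_u: "\<bar>f x - s * f u\<bar> \<le> real (gdist E x u) * m"
    unfolding s_def by (rule relpowp_abs_alternating_le[OF assms(2) gdist_walk[OF assms(3) edge_in_V(1)[OF uv]]])
  have walk_v: "\<bar>f x - s * f v\<bar> \<le> real (gdist E x v) * m"
    unfolding s_v by (rule relpowp_abs_alternating_le[OF assms(2) gdist_walk[OF assms(3) edge_in_V(2)[OF uv]]])
  have "(f x - s * f u) + (f x - s * f v) + s * (f u + f v) = 2 * f x"
    by (simp add: algebra_simps)
  then have "2 * \<bar>f x\<bar> = \<bar>(f x - s * f u) + (f x - s * f v) + s * (f u + f v)\<bar>"
    by simp
  also have "\<dots> \<le> \<bar>f x - s * f u\<bar> + \<bar>f x - s * f v\<bar> + \<bar>s * (f u + f v)\<bar>"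
    by (rule order_trans[OF abs_triangle_ineq add_right_mono[OF abs_triangle_ineq]])
  also have "\<dots> \<le> (real (gdist E x u) + real (gdist E x v) + 1) * m"
  proof -
    have "\<bar>s * (f u + f v)\<bar> = \<bar>f u + f v\<bar>" by (simp add: s_def abs_mult)
    then show ?thesis using walk_u walk_v assms(2)[OF uv] by (simp add: algebra_simps)
  qed
  also have "\<dots> \<le> (2 * real (diameter V E) + 1) * m"
    using gdist_le_diameter[OF assms(3) edge_in_V(1)[OF uv]] gdist_le_diameter[OF assms(3) edge_in_V(2)[OF uv]]
      assms(2)[OF uv] by (intro mult_right_mono) auto
  finally show ?thesis .
qed

lemma Gamma_plus_edge_lower:
  "E a b \<Longrightarrow> (f b + f a)\<^sup>2 / (2 * real (max_deg V E)) \<le> Gamma_plus V E f a"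
  unfolding Gamma_plus_def by (rule edge_term_le_nbr_average) auto

lemma Bochner_coefficient_pos:
  assumes square: "\<And>x. x \<in> V \<Longrightarrow> laplacian V E (\<lambda>z. (F z)\<^sup>2) x = 2 * G x - 2 * \<kappa> * (F x)\<^sup>2"
    and G_nonneg: "\<And>x. x \<in> V \<Longrightarrow> 0 \<le> G x"
    and "a \<in> V" "m \<noteq> 0" and G_a: "m\<^sup>2 / (2 * real (max_deg V E)) \<le> G a"
  shows "0 < \<kappa>"
proof -
  have "0 < m\<^sup>2 / (2 * real (max_deg V E))"
    using \<open>m \<noteq> 0\<close> max_deg_pos by simp
  then have "0 < G a" using G_a by linarith
  have "0 = (\<Sum>x\<in>V. real (deg V E x) * laplacian V E (\<lambda>z. (F z)\<^sup>2) x)"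
    using sum_deg_laplacian[OF finite_V] edge_sym by metis
  also have "\<dots> = 2 * (\<Sum>x\<in>V. real (deg V E x) * G x)
      - 2 * \<kappa> * (\<Sum>x\<in>V. real (deg V E x) * (F x)\<^sup>2)"
    by (simp add: square sum_subtractf sum_distrib_left algebra_simps)
  finally have "(\<Sum>x\<in>V. real (deg V E x) * G x) = \<kappa> * (\<Sum>x\<in>V. real (deg V E x) * (F x)\<^sup>2)"
    by simp
  moreover have "0 < (\<Sum>x\<in>V. real (deg V E x) * G x)"
    using \<open>0 < G a\<close> \<open>a \<in> V\<close> G_nonneg deg_pos finite_V by (intro sum_pos2[of V a]) auto
  moreover have "0 \<le> (\<Sum>x\<in>V. real (deg V E x) * (F x)\<^sup>2)"
    by (intro sum_nonneg) auto
  ultimately show ?thesis by (auto simp: zero_less_mult_iff)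
qed

lemma Bochner_coefficient_bound:
  assumes "0 < \<kappa>"
    and Bochner: "\<And>x. x \<in> V \<Longrightarrow> 0 \<le> laplacian V E G x / 2 + \<kappa> * G x"
    and square: "\<And>x. x \<in> V \<Longrightarrow> laplacian V E (\<lambda>z. (F z)\<^sup>2) x = 2 * G x - 2 * \<kappa> * (F x)\<^sup>2"
    and bounded: "\<And>x. x \<in> V \<Longrightarrow> \<bar>F x\<bar> \<le> M" and "0 < M" "M \<le> K * m"
    and "a \<in> V" and G_a: "m\<^sup>2 / (2 * real (max_deg V E)) \<le> G a"
  shows "1 \<le> 8 * real (max_deg V E) * K\<^sup>2 * \<kappa>"
proof -
  let ?d = "real (max_deg V E)"
  have "0 < ?d" using max_deg_pos by simp
  have "m\<^sup>2 / (2 * ?d) \<le> 4 * \<kappa> * M\<^sup>2"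
    using G_a maximum_principle_bound[OF finite_V V_nonempty assms(1) Bochner square bounded \<open>a \<in> V\<close>]
    by linarith
  then have m: "m\<^sup>2 \<le> 8 * ?d * \<kappa> * M\<^sup>2"
    using \<open>0 < ?d\<close> by (simp add: field_simps)
  have "M\<^sup>2 \<le> (K * m)\<^sup>2"
    using \<open>0 < M\<close> \<open>M \<le> K * m\<close> by (intro power_mono) auto
  also have "\<dots> = K\<^sup>2 * m\<^sup>2"
    by (simp add: power_mult_distrib)
  also have "\<dots> \<le> K\<^sup>2 * (8 * ?d * \<kappa> * M\<^sup>2)"
    using m by (intro mult_left_mono) auto
  finally have "M\<^sup>2 * 1 \<le> M\<^sup>2 * (8 * ?d * K\<^sup>2 * \<kappa>)"
    by (simp add: algebra_simps)
  then show ?thesis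
    using \<open>0 < M\<close> by (simp add: mult_le_cancel_left)
qed

lemma Gamma_Bochner:
  assumes CD: "CD_0_inf V E"
    and eigen: "\<And>x. x \<in> V \<Longrightarrow> laplacian V E f x = - lam * f x" and "x \<in> V"
  shows "0 \<le> laplacian V E (Gamma V E f f) x / 2 + lam * Gamma V E f f x"
proof -
  have "0 \<le> Gamma2 V E f f x"
    using CD \<open>x \<in> V\<close> unfolding CD_0_inf_def by blast
  also have "\<dots> = laplacian V E (Gamma V E f f) x / 2 + lam * Gamma V E f f x"
    by (rule Gamma2_eigen) (use eigen \<open>x \<in> V\<close> edge_in_V in auto)
  finally show ?thesis .
qed

lemma nonconstant_ex_edge:
  assumes "x \<in> V" "y \<in> V" "f x \<noteq> f y"
  obtains u v where "E u v" "f u \<noteq> f v"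
proof -
  have "E\<^sup>*\<^sup>* x y \<Longrightarrow> f x = f y" if "\<And>u v. E u v \<Longrightarrow> f u = f v"
    by (induction rule: rtranclp_induct) (auto dest: that)
  then show ?thesis
    using assms connected that unfolding connected_graph_def by blast
qed

lemma eigenfunction_deg_sum_zero:
  assumes "lam \<noteq> 0" and eigen: "\<And>x. x \<in> V \<Longrightarrow> laplacian V E f x = - lam * f x"
  shows "(\<Sum>x\<in>V. real (deg V E x) * f x) = 0"
proof -
  have "0 = (\<Sum>x\<in>V. real (deg V E x) * laplacian V E f x)"
    using sum_deg_laplacian[OF finite_V] edge_sym by metis
  also have "\<dots> = (\<Sum>x\<in>V. real (deg V E x) * (- lam * f x))"
    using eigen by simp
  also have "\<dots> = - lam * (\<Sum>x\<in>V. real (deg V E x) * f x)"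
    by (simp add: sum_distrib_left algebra_simps)
  finally show ?thesis using \<open>lam \<noteq> 0\<close> by simp
qed

lemma deg_sum_zero_ex_abs_le_diff:
  assumes "(\<Sum>x\<in>V. real (deg V E x) * f x) = 0" "x \<in> V"
  obtains y where "y \<in> V" "\<bar>f x\<bar> \<le> \<bar>f x - f y\<bar>"
proof -
  obtain y where "y \<in> V" "f x * f y \<le> 0"
    using weighted_sum_zero_sign_change[OF finite_V assms(1) _ assms(2)] deg_pos by auto
  moreover have "\<bar>f x\<bar> \<le> \<bar>f x - f y\<bar>"
    using \<open>f x * f y \<le> 0\<close> by (cases "0 \<le> f x") (auto simp: mult_le_0_iff)
  ultimately show ?thesis using that by blast
qed

lemma ex_max_abs:
  fixes f :: "nat \<Rightarrow> real"
  assumes "\<exists>x\<in>V. f x \<noteq> 0"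
  obtains x0 where "x0 \<in> V" "\<And>y. y \<in> V \<Longrightarrow> \<bar>f y\<bar> \<le> \<bar>f x0\<bar>" "0 < \<bar>f x0\<bar>"
proof -
  obtain x0 where "x0 \<in> V" and x0_max: "\<And>y. y \<in> V \<Longrightarrow> \<bar>f y\<bar> \<le> \<bar>f x0\<bar>"
    using ex_max_on_finite[OF finite_V V_nonempty, of "\<lambda>y. \<bar>f y\<bar>"] by blast
  moreover have "0 < \<bar>f x0\<bar>"
    using assms x0_max by force
  ultimately show ?thesis by (rule that)
qed

lemma eigenvalue_lower_bound:
  assumes CD: "CD_0_inf V E"
    and eigen: "\<And>x. x \<in> V \<Longrightarrow> laplacian V E f x = - lam * f x"
    and nonconstant: "\<exists>x\<in>V. \<exists>y\<in>V. f x \<noteq> f y"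
  shows "(1/8) / (real (max_deg V E) * real (diameter V E) ^ 2) \<le> lam"
proof -
  let ?G = "Gamma V E f f"
  note square = laplacian_square_eigen[OF eigen]
  obtain a b where ab: "E a b" and steepest: "\<And>u v. E u v \<Longrightarrow> \<bar>f u - f v\<bar> \<le> \<bar>f a - f b\<bar>"
    using ex_max_edge[of "\<lambda>u v. \<bar>f u - f v\<bar>"] by blast
  define m where "m = \<bar>f a - f b\<bar>"
  obtain u v where "E u v" "f u \<noteq> f v"
    using nonconstant nonconstant_ex_edge by blast
  then have "m \<noteq> 0"
    using steepest[of u v] unfolding m_def by auto
  have G_a: "m\<^sup>2 / (2 * real (max_deg V E)) \<le> ?G a"
    using Gamma_edge_lower[OF ab, of f] unfolding m_def by (simp add: power2_commute)
  have "0 < lam"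
    by (rule Bochner_coefficient_pos[OF square Gamma_nonneg edge_in_V(1)[OF ab] \<open>m \<noteq> 0\<close> G_a])
  have "\<exists>x\<in>V. f x \<noteq> 0"
    using nonconstant by metis
  then obtain x0 where x0: "x0 \<in> V" and x0_max: "\<And>y. y \<in> V \<Longrightarrow> \<bar>f y\<bar> \<le> \<bar>f x0\<bar>"
    and "0 < \<bar>f x0\<bar>"
    by (rule ex_max_abs) (rule that)
  obtain y where y: "y \<in> V" and "\<bar>f x0\<bar> \<le> \<bar>f x0 - f y\<bar>"
    using deg_sum_zero_ex_abs_le_diff[OF eigenfunction_deg_sum_zero[OF _ eigen] x0] \<open>0 < lam\<close> by auto
  then have M_le: "\<bar>f x0\<bar> \<le> real (diameter V E) * m"
    using abs_diff_le_diameter[of f m, OF steepest[folded m_def] x0 y] by linarith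
  have "1 \<le> 8 * real (max_deg V E) * real (diameter V E) ^ 2 * lam"
    by (rule Bochner_coefficient_bound[OF \<open>0 < lam\<close> Gamma_Bochner[OF CD eigen] square x0_max
          \<open>0 < \<bar>f x0\<bar>\<close> M_le edge_in_V(1)[OF ab] G_a])
  then show ?thesis
    using max_deg_pos diameter_pos by (simp add: pos_divide_le_eq algebra_simps)
qed

lemma nbr_sum_eigen:
  assumes "x \<in> V" "laplacian V E f x = - lam * f x"
  shows "(\<Sum>y\<in>{y\<in>V. E x y}. f y) = real (deg V E x) * (1 - lam) * f x"
  using assms laplacian_eq_nbr_average[OF deg_pos[OF assms(1)], of f] deg_pos[OF assms(1)]
  by (simp add: field_simps)

lemma triangle_free_nbr_nbr:
  assumes "triangle_free V E" "E x y" "E y z"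
  shows "\<not> E x z"
  using assms edge_sym unfolding triangle_free_def by blast

lemma laplacian_flip_nbrs:
  assumes tf: "triangle_free V E" and eigen: "\<And>x. x \<in> V \<Longrightarrow> laplacian V E f x = - lam * f x"
    and "x \<in> V" and z: "z = x \<or> E x z"
  shows "laplacian V E (flip_nbrs E f x) z = - (2 - lam) * flip_nbrs E f x z"
proof -
  have "z \<in> V" using z \<open>x \<in> V\<close> edge_in_V by blast
  have flip_z: "flip_nbrs E f x z = (if z = x then 1 else -1) * f z"
    using z edge_irrefl by (auto simp: flip_nbrs_def)
  have flip_sum: "(\<Sum>y\<in>{y\<in>V. E z y}. flip_nbrs E f x y)
      = (if z = x then -1 else 1) * (\<Sum>y\<in>{y\<in>V. E z y}. f y)"
    using z edge_irrefl triangle_free_nbr_nbr[OF tf]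
    by (auto simp: flip_nbrs_def sum_negf[symmetric] intro!: sum.cong)
  show ?thesis
    unfolding laplacian_eq_nbr_average[OF deg_pos[OF \<open>z \<in> V\<close>]] flip_sum flip_z
      nbr_sum_eigen[OF \<open>z \<in> V\<close> eigen[OF \<open>z \<in> V\<close>]]
    using deg_pos[OF \<open>z \<in> V\<close>] by (simp add: field_simps)
qed

lemma Gamma_flip_nbrs:
  assumes tf: "triangle_free V E" and z: "z = x \<or> E x z"
  shows "Gamma V E (flip_nbrs E f x) (flip_nbrs E f x) z = Gamma_plus V E f z"
  unfolding Gamma_eq_sum Gamma_plus_def
  using z edge_irrefl triangle_free_nbr_nbr[OF tf]
  by (auto simp: flip_nbrs_def power2_eq_square algebra_simps intro!: arg_cong2[where f = "(/)"] sum.cong)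

lemma Gamma_plus_Bochner:
  assumes tf: "triangle_free V E" and CD: "CD_0_inf V E"
    and eigen: "\<And>x. x \<in> V \<Longrightarrow> laplacian V E f x = - lam * f x" and "x \<in> V"
  shows "0 \<le> laplacian V E (Gamma_plus V E f) x / 2 + (2 - lam) * Gamma_plus V E f x"
proof -
  let ?g = "flip_nbrs E f x"
  have "0 \<le> Gamma2 V E ?g ?g x"
    using CD \<open>x \<in> V\<close> unfolding CD_0_inf_def by blast
  also have "\<dots> = laplacian V E (Gamma V E ?g ?g) x / 2 + (2 - lam) * Gamma V E ?g ?g x"
    by (rule Gamma2_eigen) (use laplacian_flip_nbrs[OF tf eigen \<open>x \<in> V\<close>] in auto)
  also have "laplacian V E (Gamma V E ?g ?g) x = laplacian V E (Gamma_plus V E f) x"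
    by (rule laplacian_cong) (rule Gamma_flip_nbrs[OF tf])
  finally show ?thesis
    by (simp add: Gamma_flip_nbrs[OF tf])
qed

lemma laplacian_square_Gamma_plus:
  assumes "x \<in> V" "laplacian V E f x = - lam * f x"
  shows "laplacian V E (\<lambda>z. (f z)\<^sup>2) x = 2 * Gamma_plus V E f x - 2 * (2 - lam) * (f x)\<^sup>2"
  using laplacian_square_eigen[OF assms(2)] Gamma_plus_eq[OF deg_pos[OF assms(1)], of f] assms(2)
  by (simp add: power2_eq_square algebra_simps)

lemma eigenvalue_upper_bound:
  assumes tf: "triangle_free V E" and nb: "\<not> bipartite V E" and CD: "CD_0_inf V E"
    and eigen: "\<And>x. x \<in> V \<Longrightarrow> laplacian V E f x = - lam * f x"
    and nonzero: "\<exists>x\<in>V. f x \<noteq> 0"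
  shows "lam \<le> 2 - (1/18) / (real (max_deg V E) * real (diameter V E) ^ 2)"
proof -
  let ?G = "Gamma_plus V E f" and ?D = "real (diameter V E)"
  note square = laplacian_square_Gamma_plus[OF _ eigen]
  obtain a b where ab: "E a b" and steepest: "\<And>u v. E u v \<Longrightarrow> \<bar>f u + f v\<bar> \<le> \<bar>f a + f b\<bar>"
    using ex_max_edge[of "\<lambda>u v. \<bar>f u + f v\<bar>"] by blast
  define m where "m = \<bar>f a + f b\<bar>"
  obtain x0 where x0: "x0 \<in> V" and x0_max: "\<And>y. y \<in> V \<Longrightarrow> \<bar>f y\<bar> \<le> \<bar>f x0\<bar>"
    and "0 < \<bar>f x0\<bar>"
    using nonzero by (rule ex_max_abs) (rule that)
  have "2 * \<bar>f x0\<bar> \<le> (2 * ?D + 1) * m"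
    unfolding m_def by (rule abs_le_odd_cycle[OF nb steepest x0])
  moreover have "(2 * ?D + 1) * m \<le> (3 * ?D) * m"
    using diameter_pos unfolding m_def by (intro mult_right_mono) auto
  ultimately have M_le: "\<bar>f x0\<bar> \<le> (3 * ?D / 2) * m"
    by simp
  have "m \<noteq> 0"
    using M_le \<open>0 < \<bar>f x0\<bar>\<close> by auto
  have G_a: "m\<^sup>2 / (2 * real (max_deg V E)) \<le> ?G a"
    using Gamma_plus_edge_lower[OF ab, of f] unfolding m_def by (simp add: add.commute)
  have "0 < 2 - lam"
    by (rule Bochner_coefficient_pos[OF square Gamma_plus_nonneg edge_in_V(1)[OF ab] \<open>m \<noteq> 0\<close> G_a])
  have "1 \<le> 8 * real (max_deg V E) * (3 * ?D / 2)\<^sup>2 * (2 - lam)"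
    by (rule Bochner_coefficient_bound[OF \<open>0 < 2 - lam\<close> Gamma_plus_Bochner[OF tf CD eigen] square
          x0_max \<open>0 < \<bar>f x0\<bar>\<close> M_le edge_in_V(1)[OF ab] G_a])
  then have "1/18 \<le> (2 - lam) * (real (max_deg V E) * ?D ^ 2)"
    by (simp add: power_divide power_mult_distrib algebra_simps)
  moreover have "0 < real (max_deg V E) * ?D ^ 2"
    using max_deg_pos diameter_pos by simp
  ultimately have "(1/18) / (real (max_deg V E) * ?D ^ 2) \<le> 2 - lam"
    by (simp add: pos_divide_le_eq)
  then show ?thesis
    by simp
qed

end

theorem theorem1p3:
  shows "\<exists>c C :: real. c > 0 \<and> C > 0 \<and>
    (\<forall>(V :: nat set) (E :: nat \<Rightarrow> nat \<Rightarrow> bool).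
       simple_graph V E \<and> connected_graph V E \<and> triangle_free V E \<and>
       \<not> bipartite V E \<and> CD_0_inf V E \<longrightarrow>
       (\<forall>lam f. lap_eigenpair V E lam f \<longrightarrow>
          lam \<le> 2 - C / (real (max_deg V E) * real (diameter V E) ^ 2) \<and>
          ((\<exists>x\<in>V. \<exists>y\<in>V. f x \<noteq> f y) \<longrightarrow>
             c / (real (max_deg V E) * real (diameter V E) ^ 2) \<le> lam)))"
proof (rule exI[of _ "1/8"], rule exI[of _ "1/18"], intro conjI allI impI)
  fix V E lam f
  assume graph: "simple_graph V E \<and> connected_graph V E \<and> triangle_free V E \<and>
      \<not> bipartite V E \<and> CD_0_inf V E"
    and "lap_eigenpair V E lam f"
  then have eigen: "\<And>x. x \<in> V \<Longrightarrow> laplacian V E f x = - lam * f x"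
    and nonzero: "\<exists>x\<in>V. f x \<noteq> 0"
    unfolding lap_eigenpair_def by auto
  interpret nontrivial_connected_graph V E
    using graph non_bipartite_has_edge by unfold_locales auto
  show "lam \<le> 2 - (1/18) / (real (max_deg V E) * real (diameter V E) ^ 2)"
    using eigenvalue_upper_bound[OF _ _ _ eigen nonzero] graph by blast
  show "(1/8) / (real (max_deg V E) * real (diameter V E) ^ 2) \<le> lam"
    if "\<exists>x\<in>V. \<exists>y\<in>V. f x \<noteq> f y"
    using eigenvalue_lower_bound[OF _ eigen that] graph by blast
qed simp_all

end
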